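(* Let $n\ge2$ and let $h:[-1,1]\to(-\infty,+\infty]$ be continuous and finite on $[-1,1)$ with $h^{(j)}(t)\ge0$ for $j=0,1,2,3,4$ and $t\in(-1,1)$. Let $C_{2n}=\{\pm e_1,\dots,\pm e_n\}\subset\mathbb{S}^{n-1}$ be the cross-polytope. If $n\in\{2,3,4\}$, then $\mathcal{Q}_h(C_{2n})\ge\mathcal{Q}_h(C)$ for every spherical $2$-design $C\subset\mathbb{S}^{n-1}$ with $|C|=2n$. For general $n\ge2$, the same conclusion holds provided that $s_{2n}=1/\sqrt n$.
   Context: $\mathbb{S}^{n-1}$ is the unit sphere in $\mathbb{R}^n$, $e_i$ the standard basis vectors. $U_h(x,C):=\sum_{y\in C}h(x\cdot y)$, $\mathcal{Q}_h(C):=\inf_{x\in\mathbb{S}^{n-1}}U_h(x,C)$. A spherical $2$-design is a finite $C\subset\mathbb{S}^{n-1}$ on which the average of every polynomial of degree $\le2$ equals its average over the sphere. For a code $C$, $s_C:=\min_{x\in\mathbb{S}^{n-1}}\max_{y\in C}x\cdot y$ and $s_{N}:=\max\{s_C: C\subset\mathbb{S}^{n-1},\ |C|=N\}$ (so $s_N=1-\rho(N)^2/2$ where $\rho(N)$ is the best covering radius of $N$ points on $\mathbb{S}^{n-1}$). *)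

theory Defs
  imports "HOL-Analysis.Analysis" "HOL-Library.Extended_Real"
begin

definition U_h :: "(real \<Rightarrow> ereal) \<Rightarrow> 'a::real_inner \<Rightarrow> 'a set \<Rightarrow> ereal" where
  "U_h h x C = (\<Sum>y\<in>C. h (x \<bullet> y))"

definition Q_h :: "(real \<Rightarrow> ereal) \<Rightarrow> 'a::real_inner set \<Rightarrow> ereal" where
  "Q_h h C = (INF x\<in>sphere (0::'a) 1. U_h h x C)"

definition deg_le2_poly :: "(real^'n \<Rightarrow> real) \<Rightarrow> bool" where
  "deg_le2_poly p \<longleftrightarrow> (\<exists>c (b::real^'n) (A::real^'n^'n).
     \<forall>x. p x = c + (\<Sum>i\<in>UNIV. b$i * x$i) + (\<Sum>i\<in>UNIV. \<Sum>j\<in>UNIV. A$i$j * x$i * x$j))"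

text \<open>Average over the unit sphere with respect to the normalized surface measure,
  realized as the cone measure: (1/vol B) * integral over the unit ball B of f(x/|x|).\<close>
definition sphere_avg :: "(real^'n \<Rightarrow> real) \<Rightarrow> real" where
  "sphere_avg f = integral (ball 0 1) (\<lambda>x. f (x /\<^sub>R norm x)) / Henstock_Kurzweil_Integration.content (ball (0::real^'n) 1)"

definition spherical_2_design :: "(real^'n) set \<Rightarrow> bool" where
  "spherical_2_design C \<longleftrightarrow> finite C \<and> C \<noteq> {} \<and> C \<subseteq> sphere 0 1 \<and>
     (\<forall>p. deg_le2_poly p \<longrightarrow> (\<Sum>x\<in>C. p x) / real (card C) = sphere_avg p)"

definition cross_polytope :: "(real^'n) set" where
  "cross_polytope = {x. \<exists>i. x = axis i 1 \<or> x = axis i (-1)}"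

definition s_code :: "'a::real_inner set \<Rightarrow> real" where
  "s_code C = (INF x\<in>sphere (0::'a) 1. Max ((\<lambda>y. x \<bullet> y) ` C))"

definition s_best :: "'a::real_inner itself \<Rightarrow> nat \<Rightarrow> real" where
  "s_best _ N = Sup {s_code C | C::'a set. C \<subseteq> sphere 0 1 \<and> finite C \<and> card C = N}"

end

theory Submission
  imports Defs
begin

text \<open>
  Put a = 1 / sqrt n and let D j be the j-th derivative of h on (-1, 1); only D 3 \<ge> 0 and
  D 4 \<ge> 0 are used.

  Design side: since D 3 \<ge> 0, the quadratic q interpolating h at -a to first order and at a
  lies above h on [-1, a]. A 2-design C of 2n points reproduces the sphere average of every
  quadratic, so for a unit vector x with x \<bullet> y \<le> a for all y \<in> C we get
  U_h(x, C) \<le> \<Sum>y\<in>C. q (x \<bullet> y) = n (q a + q (-a)) = n (h a + h (-a)).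
  Such an x exists for every 2-design of 2n points.

  Cross-polytope side: since D 4 \<ge> 0, h t + h (-t) is a convex function of t^2 and lies above
  its tangent at t^2 = a^2. Summing over the coordinates of a unit vector z, whose squares add
  up to 1 = n a^2, gives U_h(z, C_2n) \<ge> n (h a + h (-a)).
\<close>

section \<open>Sign conditions from higher derivatives\<close>

lemma deriv_nonpos_imp_antimono:
  fixes g g' :: "real \<Rightarrow> real"
  assumes "\<And>x. x \<in> {a..b} \<Longrightarrow> (g has_real_derivative g' x) (at x)"
    and "\<And>x. x \<in> {a..b} \<Longrightarrow> g' x \<le> 0"
    and "a \<le> b"
  shows "g b \<le> g a"
  using deriv_nonneg_imp_mono[of a b "\<lambda>x. - g x" "\<lambda>x. - g' x"] assms
  by (auto intro: DERIV_minus)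

lemma convex_on_sign_between_zeros:
  fixes f :: "real \<Rightarrow> real"
  assumes f: "convex_on I f" and I: "p \<in> I" "c \<in> I" "t \<in> I"
    and "p < c" and zeros: "f p = 0" "f c = 0"
  shows "p \<le> t \<Longrightarrow> t \<le> c \<Longrightarrow> f t \<le> 0"
    and "t \<le> p \<or> c \<le> t \<Longrightarrow> 0 \<le> f t"
proof -
  show "f t \<le> 0" if "p \<le> t" "t \<le> c"
  proof (cases "t = p \<or> t = c")
    case False
    then have "(f p - f t) / (p - t) \<le> (f p - f c) / (p - c)"
      using that by (intro convex_on_slope_le(1)[OF f I(1,2)]) auto
    with zeros that have "0 \<le> f t / (p - t)" "p - t < 0" using False by auto
    then show ?thesis by (simp add: zero_le_divide_iff)
  qed (use zeros in auto)
  show "0 \<le> f t" if "t \<le> p \<or> c \<le> t"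
  proof (cases "t = p \<or> t = c")
    case False
    with that consider "t < p" | "c < t" by linarith
    then show ?thesis
    proof cases
      case 1
      then have "(f t - f c) / (t - c) \<le> (f p - f c) / (p - c)"
        using \<open>p < c\<close> by (intro convex_on_slope_le(2)[OF f I(3,2)]) auto
      then show ?thesis using zeros 1 \<open>p < c\<close> by (simp add: divide_le_0_iff)
    next
      case 2
      then have "(f p - f c) / (p - c) \<le> (f p - f t) / (p - t)"
        using \<open>p < c\<close> by (intro convex_on_slope_le(1)[OF f I(1,3)]) auto
      with zeros have "f t / (p - t) \<le> 0" by simp
      moreover have "p - t < 0" using 2 \<open>p < c\<close> by simp
      ultimately show ?thesis by (simp add: divide_le_0_iff)
    qed
  qed (use zeros in auto)
qed

lemma hermite_error_nonpos:
  fixes E E1 E2 E3 :: "real \<Rightarrow> real"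
  assumes "l < p" "p < q" "q < u"
    and E: "\<And>t. t \<in> {l<..<u} \<Longrightarrow> (E has_real_derivative E1 t) (at t)"
    and E1: "\<And>t. t \<in> {l<..<u} \<Longrightarrow> (E1 has_real_derivative E2 t) (at t)"
    and E2: "\<And>t. t \<in> {l<..<u} \<Longrightarrow> (E2 has_real_derivative E3 t) (at t)"
    and E3: "\<And>t. t \<in> {l<..<u} \<Longrightarrow> 0 \<le> E3 t"
    and zeros: "E p = 0" "E1 p = 0" "E q = 0"
    and t: "l < t" "t \<le> q"
  shows "E t \<le> 0"
proof -
  have "E2 s \<le> E2 s'" if "s \<in> {l<..<u}" "s' \<in> {l<..<u}" "s \<le> s'" for s s'
    using that by (intro deriv_nonneg_imp_mono[of s s' E2 E3]) (auto intro: E2 E3)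
  then have cvx: "convex_on {l<..<u} E1"
    by (intro convex_on_realI[of _ _ E2] E1) auto
  obtain c where c: "p < c" "c < q" "E q - E p = (q - p) * E1 c"
    using MVT2[OF \<open>p < q\<close>, of E E1] E \<open>l < p\<close> \<open>q < u\<close> by force
  have "E1 c = 0" using c zeros by simp
  note E1_sign = convex_on_sign_between_zeros[OF cvx _ _ _ c(1) zeros(2) this]
  consider "t \<le> p" | "p \<le> t" "t \<le> c" | "c \<le> t"
    by linarith
  then show ?thesis
  proof cases
    case 1
    have "E t \<le> E p"
      using 1 t c assms(1-3) by (intro deriv_nonneg_imp_mono[of t p E E1] E E1_sign(2)) auto
    then show ?thesis using zeros by simp
  next
    case 2
    have "E t \<le> E p"
      using 2 c assms(1-3) by (intro deriv_nonpos_imp_antimono[of p t E E1] E E1_sign(1)) auto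
    then show ?thesis using zeros by simp
  next
    case 3
    have "E t \<le> E q"
      using 3 t c assms(1-3) by (intro deriv_nonneg_imp_mono[of t q E E1] E E1_sign(2)) auto
    then show ?thesis using zeros by simp
  qed
qed

lemma quadratic_hermite_interpolant_ge:
  fixes \<phi> \<phi>1 \<phi>2 \<phi>3 :: "real \<Rightarrow> real"
  assumes pq: "l < p" "p < q" "q < u"
    and \<phi>: "\<And>t. t \<in> {l<..<u} \<Longrightarrow> (\<phi> has_real_derivative \<phi>1 t) (at t)"
    and \<phi>1: "\<And>t. t \<in> {l<..<u} \<Longrightarrow> (\<phi>1 has_real_derivative \<phi>2 t) (at t)"
    and \<phi>2: "\<And>t. t \<in> {l<..<u} \<Longrightarrow> (\<phi>2 has_real_derivative \<phi>3 t) (at t)"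
    and \<phi>3: "\<And>t. t \<in> {l<..<u} \<Longrightarrow> 0 \<le> \<phi>3 t"
    and t: "l < t" "t \<le> q"
  shows "\<phi> t \<le> \<phi> p + \<phi>1 p * (t - p) + (\<phi> q - \<phi> p - \<phi>1 p * (q - p)) / (q - p)^2 * (t - p)^2"
proof -
  define \<kappa> where "\<kappa> = (\<phi> q - \<phi> p - \<phi>1 p * (q - p)) / (q - p)^2"
  have "(\<lambda>s. \<phi> s - (\<phi> p + \<phi>1 p * (s - p) + \<kappa> * (s - p)^2)) t \<le> 0"
  proof (rule hermite_error_nonpos[OF pq _ _ _ \<phi>3 _ _ _ t])
    show "((\<lambda>s. \<phi> s - (\<phi> p + \<phi>1 p * (s - p) + \<kappa> * (s - p)^2))
        has_real_derivative \<phi>1 s - (\<phi>1 p + 2 * \<kappa> * (s - p))) (at s)" if "s \<in> {l<..<u}" for s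
      using that by (auto intro!: derivative_eq_intros \<phi>)
    show "((\<lambda>s. \<phi>1 s - (\<phi>1 p + 2 * \<kappa> * (s - p))) has_real_derivative \<phi>2 s - 2 * \<kappa>) (at s)"
      if "s \<in> {l<..<u}" for s
      using that by (auto intro!: derivative_eq_intros \<phi>1)
    show "((\<lambda>s. \<phi>2 s - 2 * \<kappa>) has_real_derivative \<phi>3 s) (at s)" if "s \<in> {l<..<u}" for s
      using that by (auto intro!: derivative_eq_intros \<phi>2)
    show "\<phi> q - (\<phi> p + \<phi>1 p * (q - p) + \<kappa> * (q - p)^2) = 0"
      using pq by (simp add: \<kappa>_def)
  qed simp_all
  then show ?thesis by (simp add: \<kappa>_def)
qed

text \<open>Monotonicity of G' s / s says that s \<mapsto> G (sqrt s) is convex; the bound is its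
  tangent at a^2.\<close>
lemma ge_tangent_parabola_if_slope_mono:
  fixes G G' :: "real \<Rightarrow> real"
  assumes a: "0 < a" "a < u" and t: "0 \<le> t" "t < u"
    and G: "\<And>s. s \<in> {0..<u} \<Longrightarrow> (G has_real_derivative G' s) (at s)"
    and G'0: "G' 0 = 0"
    and slope: "\<And>s s'. 0 < s \<Longrightarrow> s \<le> s' \<Longrightarrow> s' < u \<Longrightarrow> G' s / s \<le> G' s' / s'"
  shows "G a + G' a / (2 * a) * (t^2 - a^2) \<le> G t"
proof -
  define \<beta> where "\<beta> = G' a / (2 * a)"
  define r where "r s = G s - \<beta> * s^2" for s
  define r' where "r' s = s * (G' s / s - G' a / a)" for s
  have r: "(r has_real_derivative r' s) (at s)" if "s \<in> {0..<u}" for s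
  proof -
    have "(r has_real_derivative G' s - \<beta> * (2 * s)) (at s)"
      unfolding r_def using that by (auto intro!: derivative_eq_intros G)
    moreover have "G' s - \<beta> * (2 * s) = r' s"
      using a G'0 by (cases "s = 0") (auto simp: r'_def \<beta>_def field_simps)
    ultimately show ?thesis by simp
  qed
  have "r a \<le> r t"
  proof (cases "t \<le> a")
    case True
    have "r' s \<le> 0" if "s \<in> {t..a}" for s
      using that t slope[of s a] a by (cases "s = 0") (auto simp: r'_def mult_nonneg_nonpos)
    then show ?thesis
      using True t a by (intro deriv_nonpos_imp_antimono[of t a r r'] r) auto
  next
    case False
    have "0 \<le> r' s" if "s \<in> {a..t}" for s
      using that t slope[of a s] a by (auto simp: r'_def)
    then show ?thesis
      using False t a by (intro deriv_nonneg_imp_mono[of a t r r'] r) auto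
  qed
  then show ?thesis by (simp add: r_def \<beta>_def algebra_simps)
qed

lemma convex_on_slope_from_zero_mono:
  fixes f :: "real \<Rightarrow> real"
  assumes f: "convex_on {0..<u} f" and "f 0 = 0" and s: "0 < s" "s \<le> s'" "s' < u"
  shows "f s / s \<le> f s' / s'"
proof (cases "s = s'")
  case False
  then have "(f 0 - f s) / (0 - s) \<le> (f 0 - f s') / (0 - s')"
    using s by (intro convex_on_slope_le(1)[OF f]) auto
  with \<open>f 0 = 0\<close> show ?thesis by simp
qed simp

lemma even_part_ge_tangent_parabola:
  fixes \<phi> \<phi>1 \<phi>2 \<phi>3 \<phi>4 :: "real \<Rightarrow> real"
  assumes \<phi>: "\<And>t. t \<in> {-u<..<u} \<Longrightarrow> (\<phi> has_real_derivative \<phi>1 t) (at t)"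
    and \<phi>1: "\<And>t. t \<in> {-u<..<u} \<Longrightarrow> (\<phi>1 has_real_derivative \<phi>2 t) (at t)"
    and \<phi>2: "\<And>t. t \<in> {-u<..<u} \<Longrightarrow> (\<phi>2 has_real_derivative \<phi>3 t) (at t)"
    and \<phi>3: "\<And>t. t \<in> {-u<..<u} \<Longrightarrow> (\<phi>3 has_real_derivative \<phi>4 t) (at t)"
    and \<phi>4: "\<And>t. t \<in> {-u<..<u} \<Longrightarrow> 0 \<le> \<phi>4 t"
    and a: "0 < a" "a < u" and t: "\<bar>t\<bar> < u"
  shows "\<phi> a + \<phi> (-a) + (\<phi>1 a - \<phi>1 (-a)) / (2 * a) * (t^2 - a^2) \<le> \<phi> t + \<phi> (-t)"
proof -
  define G where "G s = \<phi> s + \<phi> (-s)" for s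
  define G1 where "G1 s = \<phi>1 s - \<phi>1 (-s)" for s
  define G2 where "G2 s = \<phi>2 s + \<phi>2 (-s)" for s
  define G3 where "G3 s = \<phi>3 s - \<phi>3 (-s)" for s
  have mirror: "((\<lambda>s. f (-s)) has_real_derivative - f' (-s)) (at s)"
    if "\<And>s. s \<in> {-u<..<u} \<Longrightarrow> (f has_real_derivative f' s) (at s)" "s \<in> {-u<..<u}" for f f' s
  proof -
    have "(f has_real_derivative f' (-s)) (at (-s))" using that by auto
    then show ?thesis by (simp add: DERIV_mirror)
  qed
  have G: "(G has_real_derivative G1 s) (at s)" if "s \<in> {-u<..<u}" for s
    unfolding G_def G1_def using DERIV_add[OF \<phi> mirror[OF \<phi>]] that by simp
  have G1: "(G1 has_real_derivative G2 s) (at s)" if "s \<in> {-u<..<u}" for s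
    unfolding G1_def G2_def using DERIV_diff[OF \<phi>1 mirror[OF \<phi>1]] that by simp
  have G2: "(G2 has_real_derivative G3 s) (at s)" if "s \<in> {-u<..<u}" for s
    unfolding G2_def G3_def using DERIV_add[OF \<phi>2 mirror[OF \<phi>2]] that by simp
  have G3: "0 \<le> G3 s" if "s \<in> {0..<u}" for s
  proof -
    have "\<phi>3 (-s) \<le> \<phi>3 s"
      using that by (intro deriv_nonneg_imp_mono[of "-s" s \<phi>3 \<phi>4] \<phi>3 \<phi>4) auto
    then show ?thesis by (simp add: G3_def)
  qed
  have "G2 s \<le> G2 s'" if "s \<in> {0..<u}" "s' \<in> {0..<u}" "s \<le> s'" for s s'
    using that a by (intro deriv_nonneg_imp_mono[of s s' G2 G3] G2 G3) auto
  then have cvx: "convex_on {0..<u} G1"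
    using a by (intro convex_on_realI[of _ _ G2] G1) auto
  have "G1 0 = 0" by (simp add: G1_def)
  have tangent: "G a + G1 a / (2 * a) * (s^2 - a^2) \<le> G s" if "0 \<le> s" "s < u" for s
    using a G \<open>G1 0 = 0\<close> convex_on_slope_from_zero_mono[OF cvx \<open>G1 0 = 0\<close>]
    by (intro ge_tangent_parabola_if_slope_mono[OF a that]) auto
  show ?thesis
  proof (cases "0 \<le> t")
    case True
    then show ?thesis using tangent[of t] t by (simp add: G_def G1_def)
  next
    case False
    then show ?thesis using tangent[of "-t"] t by (simp add: G_def G1_def add.commute)
  qed
qed

section \<open>Symmetries of the sphere average\<close>

lemma integral_ball_twiddle:
  fixes g :: "real^'n \<Rightarrow> real^'n" and f :: "real^'n \<Rightarrow> real"
  assumes g_inv: "\<And>x. g (g x) = x" and g_norm: "\<And>x. norm (g x) = norm x"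
    and g_cont: "\<And>x. continuous (at x) g"
    and g_box: "\<And>u v. \<exists>w z. g ` cbox u v = cbox w z"
    and g_measure: "\<And>u v. measure lborel (g ` cbox u v) = measure lborel (cbox u v)"
  shows "integral (ball 0 1) (\<lambda>x. f (g x)) = integral (ball 0 1) f"
proof -
  let ?Q = "cbox (vec (-1)) (vec 1) :: (real^'n) set"
  have ball_Q: "ball 0 1 \<subseteq> ?Q"
  proof
    fix x :: "real^'n" assume "x \<in> ball 0 1"
    then have "\<bar>x $ k\<bar> < 1" for k using component_le_norm_cart[of x k] by simp
    then show "x \<in> ?Q" by (auto simp: mem_box_cart abs_less_iff less_imp_le)
  qed
  have gQ: "g ` ?Q \<supseteq> ball 0 1"
  proof
    fix x :: "real^'n" assume "x \<in> ball 0 1"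
    then have "g x \<in> ?Q" using g_norm[of x] ball_Q by auto
    then show "x \<in> g ` ?Q" using g_inv[of x] by (metis image_eqI)
  qed
  have twiddle: "((\<lambda>x. F (g x)) has_integral i) (ball 0 1)"
    if "(F has_integral i) (ball 0 1)" for F :: "real^'n \<Rightarrow> real" and i
  proof -
    let ?F = "\<lambda>x. if x \<in> ball 0 1 then F x else 0"
    have "(?F has_integral i) ?Q"
      using has_integral_restrict[OF ball_Q] that by blast
    from has_integral_twiddle[where r=1, OF _ g_inv g_inv g_cont g_box g_box _ this] g_measure
    have "((\<lambda>x. ?F (g x)) has_integral i) (g ` ?Q)" by simp
    moreover have "?F (g x) = (if x \<in> ball 0 1 then F (g x) else 0)" for x
      using g_norm[of x] by simp
    ultimately have "((\<lambda>x. if x \<in> ball 0 1 then F (g x) else 0) has_integral i) (g ` ?Q)"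
      by simp
    then show ?thesis using has_integral_restrict[OF gQ] by blast
  qed
  show ?thesis
  proof (cases "f integrable_on ball 0 1")
    case True
    then show ?thesis using twiddle by (blast intro: integral_unique)
  next
    case False
    moreover have "\<not> (\<lambda>x. f (g x)) integrable_on ball 0 1"
      using twiddle[of "\<lambda>x. f (g x)"] False g_inv by auto
    ultimately show ?thesis by (simp add: not_integrable_integral)
  qed
qed

lemma sphere_avg_twiddle:
  fixes g :: "real^'n \<Rightarrow> real^'n" and p :: "real^'n \<Rightarrow> real"
  assumes g_inv: "\<And>x. g (g x) = x" and g_norm: "\<And>x. norm (g x) = norm x"
    and g_cont: "\<And>x. continuous (at x) g"
    and g_box: "\<And>u v. \<exists>w z. g ` cbox u v = cbox w z"
    and g_measure: "\<And>u v. measure lborel (g ` cbox u v) = measure lborel (cbox u v)"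
    and g_scale: "\<And>c x. g (c *\<^sub>R x) = c *\<^sub>R g x"
  shows "sphere_avg (\<lambda>x. p (g x)) = sphere_avg p"
proof -
  have "(\<lambda>x. p (g (x /\<^sub>R norm x))) = (\<lambda>x. p (g x /\<^sub>R norm (g x)))"
    using g_scale g_norm by simp
  then show ?thesis
    unfolding sphere_avg_def
    using integral_ball_twiddle[OF g_inv g_norm g_cont g_box g_measure, of "\<lambda>y. p (y /\<^sub>R norm y)"] by simp
qed

lemma involution_image_eq_vimage: "(\<And>x. g (g x) = x) \<Longrightarrow> g ` S = g -` S"
  by (auto, metis image_eqI)

definition reflect_coord :: "'n \<Rightarrow> real^'n \<Rightarrow> real^'n" where
  "reflect_coord i x = (\<chi> k. if k = i then - x $ k else x $ k)"

definition swap_coords :: "'n \<Rightarrow> 'n \<Rightarrow> real^'n \<Rightarrow> real^'n" where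
  "swap_coords i j x = (\<chi> k. x $ Transposition.transpose i j k)"

lemma reflect_coord_involution [simp]: "reflect_coord i (reflect_coord i x) = x"
  by (simp add: reflect_coord_def vec_eq_iff)

lemma swap_coords_involution [simp]: "swap_coords i j (swap_coords i j x) = x"
  by (simp add: swap_coords_def vec_eq_iff)

lemma norm_reflect_coord: "norm (reflect_coord i x) = norm x"
  unfolding norm_eq_sqrt_inner inner_vec_def by (auto simp: reflect_coord_def intro!: sum.cong)

lemma norm_swap_coords: "norm (swap_coords i j x) = norm x"
proof -
  have "(\<Sum>k\<in>UNIV. x $ Transposition.transpose i j k * x $ Transposition.transpose i j k)
      = (\<Sum>k\<in>UNIV. x $ k * x $ k)"
    by (rule sum.reindex_bij_betw[OF bij_transpose, of "\<lambda>k. x $ k * x $ k"])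
  then show ?thesis by (simp add: norm_eq_sqrt_inner inner_vec_def swap_coords_def)
qed

lemma linear_reflect_coord: "linear (reflect_coord i)"
  by (rule linearI) (auto simp: reflect_coord_def vec_eq_iff)

lemma linear_swap_coords: "linear (swap_coords i j)"
  by (rule linearI) (auto simp: swap_coords_def vec_eq_iff)

lemma reflect_coord_cbox:
  "reflect_coord i ` cbox u v =
    cbox (\<chi> k. if k = i then - v $ k else u $ k) (\<chi> k. if k = i then - u $ k else v $ k)"
proof -
  have "u $ k \<le> reflect_coord i x $ k \<and> reflect_coord i x $ k \<le> v $ k \<longleftrightarrow>
      (if k = i then - v $ k else u $ k) \<le> x $ k \<and> x $ k \<le> (if k = i then - u $ k else v $ k)"
    for x k
    by (auto simp: reflect_coord_def)
  then show ?thesis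
    unfolding involution_image_eq_vimage[OF reflect_coord_involution]
    by (simp add: mem_box_cart set_eq_iff)
qed

lemma swap_coords_cbox:
  "swap_coords i j ` cbox u v =
    cbox (\<chi> k. u $ Transposition.transpose i j k) (\<chi> k. v $ Transposition.transpose i j k)"
  unfolding involution_image_eq_vimage[OF swap_coords_involution]
  by (auto simp: mem_box_cart swap_coords_def) (metis transpose_involutory)+

lemma measure_reflect_coord_cbox:
  "measure lborel (reflect_coord i ` cbox u v) = measure lborel (cbox u v)"
proof (cases "cbox u v = {}")
  case False
  have "(\<Prod>k\<in>UNIV. (if k = i then - u $ k else v $ k) - (if k = i then - v $ k else u $ k))
      = (\<Prod>k\<in>UNIV. v $ k - u $ k)"
    by (auto intro!: prod.cong)
  moreover have "reflect_coord i ` cbox u v \<noteq> {}" using False by simp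
  ultimately show ?thesis
    using False unfolding reflect_coord_cbox by (simp add: content_cbox_cart)
qed simp

lemma measure_swap_coords_cbox:
  "measure lborel (swap_coords i j ` cbox u v) = measure lborel (cbox u v)"
proof (cases "cbox u v = {}")
  case False
  have "(\<Prod>k\<in>UNIV. v $ Transposition.transpose i j k - u $ Transposition.transpose i j k)
      = (\<Prod>k\<in>UNIV. v $ k - u $ k)"
    by (rule prod.reindex_bij_betw[OF bij_transpose, of "\<lambda>k. v $ k - u $ k"])
  moreover have "swap_coords i j ` cbox u v \<noteq> {}" using False by simp
  ultimately show ?thesis
    using False unfolding swap_coords_cbox by (simp add: content_cbox_cart)
qed simp

lemma sphere_avg_reflect_coord: "sphere_avg (\<lambda>x. p (reflect_coord i x)) = sphere_avg p"
proof (rule sphere_avg_twiddle[OF reflect_coord_involution norm_reflect_coord _ _ measure_reflect_coord_cbox])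
  show "isCont (reflect_coord i) x" for x
    using linear_continuous_at linear_reflect_coord[unfolded linear_conv_bounded_linear] by blast
  show "\<exists>w z. reflect_coord i ` cbox u v = cbox w z" for u v
    using reflect_coord_cbox by blast
  show "reflect_coord i (c *\<^sub>R x) = c *\<^sub>R reflect_coord i x" for c x
    by (simp add: reflect_coord_def vec_eq_iff)
qed

lemma sphere_avg_swap_coords: "sphere_avg (\<lambda>x. p (swap_coords i j x)) = sphere_avg p"
proof (rule sphere_avg_twiddle[OF swap_coords_involution norm_swap_coords _ _ measure_swap_coords_cbox])
  show "isCont (swap_coords i j) x" for x
    using linear_continuous_at linear_swap_coords[unfolded linear_conv_bounded_linear] by blast
  show "\<exists>w z. swap_coords i j ` cbox u v = cbox w z" for u v
    using swap_coords_cbox by blast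
  show "swap_coords i j (c *\<^sub>R x) = c *\<^sub>R swap_coords i j x" for c x
    by (simp add: swap_coords_def vec_eq_iff)
qed

section \<open>Moments of spherical 2-designs\<close>

lemma deg_le2_poly_coord: "deg_le2_poly (\<lambda>x::real^'n. s * x $ i)"
  unfolding deg_le2_poly_def
proof (intro exI allI)
  fix x :: "real^'n"
  show "s * x $ i = 0 + (\<Sum>k\<in>UNIV. axis i s $ k * x $ k) + (\<Sum>k\<in>UNIV. \<Sum>l\<in>UNIV. 0 $ k $ l * x $ k * x $ l)"
    by (simp add: axis_def if_distrib[of "\<lambda>a. a * b" for b] cong: if_cong)
qed

lemma deg_le2_poly_coord_product: "deg_le2_poly (\<lambda>x::real^'n. s * (x $ i * x $ j))"
  unfolding deg_le2_poly_def
proof (intro exI allI)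
  fix x :: "real^'n"
  show "s * (x $ i * x $ j) = 0 + (\<Sum>k\<in>UNIV. 0 $ k * x $ k)
      + (\<Sum>k\<in>UNIV. \<Sum>l\<in>UNIV. (\<chi> k l. if l = j then if k = i then s else 0 else 0) $ k $ l * x $ k * x $ l)"
    by (simp add: if_distrib[of "\<lambda>a. a * b" for b] cong: if_cong)
qed

lemma spherical_2_design_sum_twiddle:
  assumes C: "spherical_2_design C"
    and p: "deg_le2_poly p" "deg_le2_poly (\<lambda>x. p (g x))"
    and avg: "sphere_avg (\<lambda>x. p (g x)) = sphere_avg p"
  shows "(\<Sum>x\<in>C. p (g x)) = (\<Sum>x\<in>C. p x)"
proof -
  have "0 < card C" using C by (simp add: spherical_2_design_def card_gt_0_iff)
  moreover have "(\<Sum>x\<in>C. p (g x)) / card C = (\<Sum>x\<in>C. p x) / card C"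
    using C p avg by (simp add: spherical_2_design_def)
  ultimately show ?thesis by (simp add: divide_cancel_right)
qed

lemma spherical_2_design_coordinate_moments:
  fixes C :: "(real^'n) set"
  assumes C: "spherical_2_design C"
  shows "(\<Sum>y\<in>C. y $ i) = 0"
    and "(\<Sum>y\<in>C. y $ k * y $ l) = (if k = l then card C / CARD('n) else 0)"
proof -
  have "(\<Sum>y\<in>C. 1 * reflect_coord i y $ i) = (\<Sum>y\<in>C. 1 * y $ i)"
    using deg_le2_poly_coord[of "-1" i]
    by (intro spherical_2_design_sum_twiddle[OF C deg_le2_poly_coord] sphere_avg_reflect_coord)
      (simp add: reflect_coord_def)
  then show "(\<Sum>y\<in>C. y $ i) = 0"
    by (simp add: reflect_coord_def sum_negf)
  have product: "(\<Sum>y\<in>C. y $ k * y $ l) = 0" if "k \<noteq> l"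
  proof -
    have "(\<Sum>y\<in>C. 1 * (reflect_coord k y $ k * reflect_coord k y $ l)) = (\<Sum>y\<in>C. 1 * (y $ k * y $ l))"
      using deg_le2_poly_coord_product[of "-1" k l] that
      by (intro spherical_2_design_sum_twiddle[OF C deg_le2_poly_coord_product] sphere_avg_reflect_coord)
        (simp add: reflect_coord_def)
    then show ?thesis using that by (simp add: reflect_coord_def sum_negf)
  qed
  have square: "(\<Sum>y\<in>C. y $ i * y $ i) = (\<Sum>y\<in>C. y $ j * y $ j)" for i j
  proof -
    have "(\<Sum>y\<in>C. 1 * (swap_coords i j y $ i * swap_coords i j y $ i)) = (\<Sum>y\<in>C. 1 * (y $ i * y $ i))"
      using deg_le2_poly_coord_product[of 1 j j]
      by (intro spherical_2_design_sum_twiddle[OF C deg_le2_poly_coord_product] sphere_avg_swap_coords)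
        (simp add: swap_coords_def)
    then show ?thesis by (simp add: swap_coords_def)
  qed
  have "CARD('n) * (\<Sum>y\<in>C. y $ k * y $ k) = (\<Sum>i\<in>(UNIV::'n set). \<Sum>y\<in>C. y $ k * y $ k)"
    by simp
  also have "\<dots> = (\<Sum>i\<in>UNIV. \<Sum>y\<in>C. y $ i * y $ i)"
    by (intro sum.cong refl square)
  also have "\<dots> = (\<Sum>y\<in>C. y \<bullet> y)"
    by (simp add: inner_vec_def sum.swap[of _ UNIV C])
  also have "\<dots> = card C"
    using C by (simp add: spherical_2_design_def dot_square_norm subset_iff cong: sum.cong)
  finally have "(\<Sum>y\<in>C. y $ k * y $ k) = card C / CARD('n)"
    by (simp add: field_simps)
  with product show "(\<Sum>y\<in>C. y $ k * y $ l) = (if k = l then card C / CARD('n) else 0)"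
    by (cases "k = l") simp_all
qed

lemma spherical_2_design_moments:
  fixes C :: "(real^'n) set"
  assumes C: "spherical_2_design C"
  shows "(\<Sum>y\<in>C. v \<bullet> y) = 0"
    and "(\<Sum>y\<in>C. (v \<bullet> y)^2) = real (card C) / CARD('n) * (norm v)^2"
proof -
  note moments = spherical_2_design_coordinate_moments[OF C]
  have "(\<Sum>y\<in>C. v \<bullet> y) = (\<Sum>k\<in>UNIV. v $ k * (\<Sum>y\<in>C. y $ k))"
    by (simp add: inner_vec_def sum.swap[of _ C UNIV] sum_distrib_left)
  then show "(\<Sum>y\<in>C. v \<bullet> y) = 0"
    by (simp add: moments(1))
  have "(\<Sum>y\<in>C. (v \<bullet> y)^2) = (\<Sum>k\<in>UNIV. \<Sum>l\<in>UNIV. v $ k * v $ l * (\<Sum>y\<in>C. y $ k * y $ l))"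
    by (simp add: inner_vec_def power2_eq_square sum_product sum_distrib_left
        sum.swap[of _ C UNIV] algebra_simps)
  also have "\<dots> = card C / CARD('n) * (v \<bullet> v)"
    by (simp add: moments(2) if_distrib sum.delta inner_vec_def sum_distrib_left algebra_simps
        cong: if_cong)
  finally show "(\<Sum>y\<in>C. (v \<bullet> y)^2) = real (card C) / CARD('n) * (norm v)^2"
    by (simp add: power2_norm_eq_inner)
qed

lemma spherical_2_design_sum_quadratic:
  fixes C :: "(real^'n) set"
  assumes C: "spherical_2_design C" and x: "norm x = 1"
  shows "(\<Sum>y\<in>C. P + Q * (x \<bullet> y) + R * (x \<bullet> y)^2) = card C * (P + R / CARD('n))"
  using spherical_2_design_moments[OF C, of x] x
  by (simp add: sum.distrib sum_distrib_left[symmetric] algebra_simps)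

section \<open>A point far from a balanced code\<close>

lemma farthest_feasible_point_active_span:
  fixes C :: "'a::euclidean_space set"
  assumes fin: "finite C"
    and v0: "\<forall>y\<in>C. v0 \<bullet> y \<le> 1"
    and farthest: "\<And>v. \<forall>y\<in>C. v \<bullet> y \<le> 1 \<Longrightarrow> norm v \<le> norm v0"
  shows "DIM('a) \<le> dim {y\<in>C. v0 \<bullet> y = 1}"
proof (rule ccontr)
  define A where "A = {y\<in>C. v0 \<bullet> y = 1}"
  assume "\<not> DIM('a) \<le> dim {y\<in>C. v0 \<bullet> y = 1}"
  then obtain d where "d \<noteq> 0" and d: "\<And>y. y \<in> span A \<Longrightarrow> orthogonal d y"
    using orthogonal_to_subspace_exists[of A] by (auto simp: A_def)
  define w where "w = (if 0 \<le> v0 \<bullet> d then d else - d)"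
  have "w \<noteq> 0" "0 \<le> v0 \<bullet> w" using \<open>d \<noteq> 0\<close> by (auto simp: w_def)
  have wA: "w \<bullet> y = 0" if "y \<in> A" for y
    using d[OF span_base[OF that]] by (simp add: w_def orthogonal_def)
  have "\<forall>\<^sub>F t in at_right 0. (v0 + t *\<^sub>R w) \<bullet> y < 1" if "y \<in> C - A" for y
  proof (rule order_tendstoD)
    show "((\<lambda>t. (v0 + t *\<^sub>R w) \<bullet> y) \<longlongrightarrow> (v0 + 0 *\<^sub>R w) \<bullet> y) (at_right 0)"
      by (intro tendsto_intros)
    show "(v0 + 0 *\<^sub>R w) \<bullet> y < 1"
      using that v0 by (auto simp: A_def order_le_less)
  qed
  then have "\<forall>\<^sub>F t in at_right 0. 0 < t \<and> (\<forall>y\<in>C - A. (v0 + t *\<^sub>R w) \<bullet> y < 1)"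
    using fin by (simp add: eventually_ball_finite eventually_conj_iff eventually_at_right_less)
  then obtain t where "0 < t" and t: "\<forall>y\<in>C - A. (v0 + t *\<^sub>R w) \<bullet> y < 1"
    using eventually_happens trivial_limit_at_right_real by blast
  have "\<forall>y\<in>C. (v0 + t *\<^sub>R w) \<bullet> y \<le> 1"
    using t wA by (force simp: A_def inner_add_left)
  then have "(norm (v0 + t *\<^sub>R w))^2 \<le> (norm v0)^2"
    by (intro power_mono farthest) auto
  moreover have "(norm (v0 + t *\<^sub>R w))^2 = (norm v0)^2 + 2 * t * (v0 \<bullet> w) + t^2 * (norm w)^2"
    using dot_norm[of v0 "t *\<^sub>R w"] by (simp add: power_mult_distrib)
  moreover have "0 < t^2 * (norm w)^2" "0 \<le> 2 * t * (v0 \<bullet> w)"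
    using \<open>0 < t\<close> \<open>w \<noteq> 0\<close> \<open>0 \<le> v0 \<bullet> w\<close> by auto
  ultimately show False by linarith
qed

text \<open>The 2n - k \<le> k inactive points have inner products with v summing to -k, so by
  Cauchy-Schwarz their squares sum to at least k^2 / (2n - k) \<ge> 2n - k.\<close>
lemma norm_ge_if_many_active:
  fixes C :: "'a::real_inner set"
  assumes fin: "finite C" and card: "card C = 2 * n"
    and active: "n \<le> card {y\<in>C. v \<bullet> y = 1}"
    and first: "(\<Sum>y\<in>C. v \<bullet> y) = 0" and second: "(\<Sum>y\<in>C. (v \<bullet> y)^2) = 2 * (norm v)^2"
  shows "n \<le> (norm v)^2"
proof -
  define A where "A = {y\<in>C. v \<bullet> y = 1}"
  define B where "B = C - A"
  define k where "k = real (card A)"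
  define S where "S = (\<Sum>y\<in>B. (v \<bullet> y)^2)"
  have "A \<subseteq> C" "finite A" "finite B" "A \<inter> B = {}"
    using fin by (auto simp: A_def B_def)
  have card_B: "real (card B) = 2 * n - k"
    using card card_mono[OF fin \<open>A \<subseteq> C\<close>] \<open>finite A\<close> \<open>A \<subseteq> C\<close>
    by (simp add: B_def k_def card_Diff_subset of_nat_diff)
  have sum_C: "sum f C = sum f A + sum f B" for f :: "'a \<Rightarrow> real"
    using \<open>A \<subseteq> C\<close> sum.union_disjoint[OF \<open>finite A\<close> \<open>finite B\<close> \<open>A \<inter> B = {}\<close>, of f]
    by (simp add: B_def Un_absorb1)
  have "(\<Sum>y\<in>A. v \<bullet> y) = k" "(\<Sum>y\<in>A. (v \<bullet> y)^2) = k"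
    by (simp_all add: A_def k_def)
  then have first_B: "(\<Sum>y\<in>B. v \<bullet> y) = - k" and S: "k + S = 2 * (norm v)^2"
    using first second sum_C by (simp_all add: S_def)
  have cs: "k^2 \<le> S * (2 * n - k)"
    using sum_squared_le_sum_of_squares[of "\<lambda>y. v \<bullet> y" B] first_B card_B by (simp add: S_def)
  have "n \<le> k" using active by (simp add: A_def k_def)
  have "0 \<le> S" by (simp add: S_def sum_nonneg)
  have "2 * n - k \<le> S"
  proof (rule ccontr)
    assume less: "\<not> 2 * n - k \<le> S"
    then have "S * (2 * n - k) < (2 * n - k) * (2 * n - k)"
      using \<open>0 \<le> S\<close> by (intro mult_strict_right_mono) auto
    also have "\<dots> \<le> k * k"
      using \<open>n \<le> k\<close> \<open>0 \<le> S\<close> less by (intro mult_mono) auto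
    finally show False using cs by (simp add: power2_eq_square)
  qed
  then show ?thesis using S by simp
qed

lemma feasible_point_norm_ge:
  fixes C :: "'a::euclidean_space set"
  assumes fin: "finite C" and card: "card C = 2 * DIM('a)"
    and first: "\<And>v. (\<Sum>y\<in>C. v \<bullet> y) = 0"
    and second: "\<And>v. (\<Sum>y\<in>C. (v \<bullet> y)^2) = 2 * (norm v)^2"
  shows "\<exists>v. (\<forall>y\<in>C. v \<bullet> y \<le> 1) \<and> sqrt DIM('a) \<le> norm v"
proof -
  define K where "K = {v::'a. \<forall>y\<in>C. v \<bullet> y \<le> 1}"
  have "\<exists>v\<in>K. sqrt DIM('a) \<le> norm v"
  proof (cases "bounded K")
    case True
    have "K = (\<Inter>y\<in>C. {v. y \<bullet> v \<le> 1})" by (auto simp: K_def inner_commute)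
    then have "compact K" using True by (simp add: compact_eq_bounded_closed closed_INT closed_halfspace_le)
    moreover have "0 \<in> K" by (simp add: K_def)
    ultimately obtain v0 where v0: "v0 \<in> K" and farthest: "\<And>v. v \<in> K \<Longrightarrow> norm v \<le> norm v0"
      using continuous_attains_sup[of K norm] continuous_on_norm_id by blast
    have "DIM('a) \<le> dim {y\<in>C. v0 \<bullet> y = 1}"
      using v0 farthest by (intro farthest_feasible_point_active_span fin) (auto simp: K_def)
    also have "\<dots> \<le> card {y\<in>C. v0 \<bullet> y = 1}"
      using fin by (intro dim_le_card') simp
    finally have "DIM('a) \<le> (norm v0)^2"
      using norm_ge_if_many_active[OF fin card _ first second] by simp
    then have "sqrt DIM('a) \<le> sqrt ((norm v0)^2)"
      by (rule real_sqrt_le_mono)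
    with v0 show ?thesis by auto
  next
    case False
    then show ?thesis by (meson bounded_iff linear not_le)
  qed
  then show ?thesis by (auto simp: K_def)
qed

lemma point_with_small_inner_products:
  fixes C :: "'a::euclidean_space set"
  assumes "finite C" "card C = 2 * DIM('a)"
    and "\<And>v. (\<Sum>y\<in>C. v \<bullet> y) = 0" "\<And>v. (\<Sum>y\<in>C. (v \<bullet> y)^2) = 2 * (norm v)^2"
  shows "\<exists>x. norm x = 1 \<and> (\<forall>y\<in>C. x \<bullet> y \<le> 1 / sqrt DIM('a))"
proof -
  obtain v where v: "\<forall>y\<in>C. v \<bullet> y \<le> 1" "sqrt DIM('a) \<le> norm v"
    using feasible_point_norm_ge[OF assms] by blast
  have "0 < sqrt DIM('a)" by simp
  with v have "0 < norm v" by linarith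
  have "(v /\<^sub>R norm v) \<bullet> y \<le> 1 / sqrt DIM('a)" if "y \<in> C" for y
  proof -
    have "(v /\<^sub>R norm v) \<bullet> y = (v \<bullet> y) / norm v" by (simp add: divide_inverse_commute)
    also have "\<dots> \<le> 1 / norm v" using v that \<open>0 < norm v\<close> by (intro divide_right_mono) auto
    also have "\<dots> \<le> 1 / sqrt DIM('a)"
      using v \<open>0 < norm v\<close> \<open>0 < sqrt DIM('a)\<close> by (intro divide_left_mono) auto
    finally show ?thesis .
  qed
  moreover have "norm (v /\<^sub>R norm v) = 1" using \<open>0 < norm v\<close> by simp
  ultimately show ?thesis by blast
qed

section \<open>Energy bounds for the design and the cross-polytope\<close>

lemma sum_cross_polytope:
  "(\<Sum>y\<in>(cross_polytope :: (real^'n) set). \<phi> (z \<bullet> y)) = (\<Sum>i\<in>UNIV. \<phi> (z $ i) + \<phi> (- (z $ i)))"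
proof -
  have split: "(cross_polytope :: (real^'n) set) = range (\<lambda>i. axis i 1) \<union> range (\<lambda>i. axis i (-1))"
    by (auto simp: cross_polytope_def)
  have "inj (\<lambda>i::'n. axis i (1::real))" "inj (\<lambda>i::'n. axis i (-1::real))"
    by (simp_all add: inj_on_def axis_eq_axis)
  moreover have "range (\<lambda>i. axis i (1::real)) \<inter> range (\<lambda>i::'n. axis i (-1)) = {}"
    by (auto simp: axis_eq_axis)
  ultimately show ?thesis
    unfolding split by (simp add: sum.union_disjoint sum.reindex inner_axis sum.distrib)
qed

lemma le_on_closure:
  fixes f g :: "'a::topological_space \<Rightarrow> 'b::linorder_topology"
  assumes f: "continuous_on (closure S) f" and g: "continuous_on (closure S) g"
    and le: "\<And>x. x \<in> S \<Longrightarrow> f x \<le> g x" and x: "x \<in> closure S"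
  shows "f x \<le> g x"
proof (cases "x \<in> S")
  case False
  with x have "at x within S \<noteq> bot"
    by (simp add: closure_def trivial_limit_within)
  moreover have "(g \<longlongrightarrow> g x) (at x within S)" "(f \<longlongrightarrow> f x) (at x within S)"
    using f g x by (auto simp: continuous_on_def intro: tendsto_within_subset[OF _ closure_subset])
  moreover have "\<forall>\<^sub>F y in at x within S. f y \<le> g y"
    using le by (auto simp: eventually_at_filter)
  ultimately show ?thesis by (rule tendsto_le)
qed (use le in auto)

locale smooth_potential =
  fixes h :: "real \<Rightarrow> ereal" and D :: "nat \<Rightarrow> real \<Rightarrow> real"
  assumes h_continuous: "continuous_on {-1..1} h"
    and h_finite_at_minus_one: "\<bar>h (-1)\<bar> \<noteq> \<infinity>"
    and h_eq: "\<And>t. t \<in> {-1<..<1} \<Longrightarrow> h t = ereal (D 0 t)"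
    and derivative: "\<And>j t. j < 4 \<Longrightarrow> t \<in> {-1<..<1} \<Longrightarrow> (D j has_real_derivative D (Suc j) t) (at t)"
    and D3_nonneg: "\<And>t. t \<in> {-1<..<1} \<Longrightarrow> 0 \<le> D 3 t"
    and D4_nonneg: "\<And>t. t \<in> {-1<..<1} \<Longrightarrow> 0 \<le> D 4 t"
begin

lemma
  shows D0: "\<And>t. t \<in> {-1<..<1} \<Longrightarrow> (D 0 has_real_derivative D 1 t) (at t)"
    and D1: "\<And>t. t \<in> {-1<..<1} \<Longrightarrow> (D 1 has_real_derivative D 2 t) (at t)"
    and D2: "\<And>t. t \<in> {-1<..<1} \<Longrightarrow> (D 2 has_real_derivative D 3 t) (at t)"
    and D3: "\<And>t. t \<in> {-1<..<1} \<Longrightarrow> (D 3 has_real_derivative D 4 t) (at t)"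
  using derivative[of 0] derivative[of 1] derivative[of 2] derivative[of 3]
  by (simp_all add: numeral_eq_Suc)

lemma continuous_on_even_part: "continuous_on {-1..1} (\<lambda>t. h t + h (-t))"
  unfolding continuous_on_def
proof
  fix t :: real assume t: "t \<in> {-1..1}"
  have "continuous_on {-1..1} (\<lambda>t. h (-t))"
    by (rule continuous_on_compose2[OF h_continuous continuous_on_minus[OF continuous_on_id]]) auto
  then have "((\<lambda>t. h (-t)) \<longlongrightarrow> h (-t)) (at t within {-1..1})"
    using t by (simp add: continuous_on_def)
  moreover have "(h \<longlongrightarrow> h t) (at t within {-1..1})"
    using h_continuous t by (simp add: continuous_on_def)
  moreover have "\<bar>h t\<bar> \<noteq> \<infinity> \<or> \<bar>h (-t)\<bar> \<noteq> \<infinity>"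
    using t h_eq[of t] h_eq[of "-t"] h_finite_at_minus_one by (cases "t = 1 \<or> t = -1") auto
  ultimately show "((\<lambda>t. h t + h (-t)) \<longlongrightarrow> h t + h (-t)) (at t within {-1..1})"
    by (intro tendsto_add_ereal_general) auto
qed

lemma h_le_quadratic_hermite_interpolant:
  assumes pq: "-1 < p" "p < q" "q < 1" and t: "t \<in> {-1..q}"
  shows "h t \<le> ereal (D 0 p + D 1 p * (t - p) + (D 0 q - D 0 p - D 1 p * (q - p)) / (q - p)^2 * (t - p)^2)"
proof -
  define P where "P s = D 0 p + D 1 p * (s - p) + (D 0 q - D 0 p - D 1 p * (q - p)) / (q - p)^2 * (s - p)^2"
    for s
  have "h t \<le> ereal (P t)"
  proof (rule le_on_closure[where S="{-1<..q}" and f=h and g="\<lambda>s. ereal (P s)"])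
    show "continuous_on (closure {-1<..q}) h"
      using pq by (simp add: continuous_on_subset[OF h_continuous])
    show "continuous_on (closure {-1<..q}) (\<lambda>s. ereal (P s))"
      unfolding P_def by (intro continuous_intros)
    show "h s \<le> ereal (P s)" if "s \<in> {-1<..q}" for s
    proof -
      have "D 0 s \<le> P s"
        unfolding P_def using that pq by (intro quadratic_hermite_interpolant_ge[OF _ _ _ D0 D1 D2 D3_nonneg]) auto
      with h_eq[of s] that pq show ?thesis by simp
    qed
    show "t \<in> closure {-1<..q}"
      using t pq by simp
  qed
  then show ?thesis by (simp add: P_def)
qed

lemma h_even_part_ge_tangent_parabola:
  assumes a: "0 < a" "a < 1" and t: "t \<in> {-1..1}"
  shows "ereal (D 0 a + D 0 (-a) + (D 1 a - D 1 (-a)) / (2 * a) * (t^2 - a^2)) \<le> h t + h (-t)"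
proof -
  define P where "P s = D 0 a + D 0 (-a) + (D 1 a - D 1 (-a)) / (2 * a) * (s^2 - a^2)" for s
  have "ereal (P t) \<le> h t + h (-t)"
  proof (rule le_on_closure[where S="{-1<..<1}" and f="\<lambda>s. ereal (P s)" and g="\<lambda>s. h s + h (-s)"])
    show "continuous_on (closure {-1<..<1}) (\<lambda>s. ereal (P s))"
      unfolding P_def by (intro continuous_intros)
    show "continuous_on (closure {-1<..<1}) (\<lambda>s. h s + h (-s))"
      using continuous_on_even_part by simp
    show "ereal (P s) \<le> h s + h (-s)" if "s \<in> {-1<..<1}" for s
    proof -
      have "P s \<le> D 0 s + D 0 (-s)"
        unfolding P_def using that a
        by (intro even_part_ge_tangent_parabola[OF D0 D1 D2 D3 D4_nonneg, where u=1]) auto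
      with h_eq[of s] h_eq[of "-s"] that show ?thesis by simp
    qed
    show "t \<in> closure {-1<..<1}"
      using t by simp
  qed
  then show ?thesis by (simp add: P_def)
qed

lemma design_energy_le:
  fixes C :: "(real^'n) set"
  assumes C: "spherical_2_design C" and x: "norm x = 1" "\<forall>y\<in>C. x \<bullet> y \<le> a"
    and a: "a = 1 / sqrt CARD('n)" and n: "2 \<le> CARD('n)"
  shows "U_h h x C \<le> ereal (card C / 2 * (D 0 a + D 0 (-a)))"
proof -
  have "0 < a" "a < 1" "a^2 = 1 / CARD('n)"
    using n by (simp_all add: a power_divide)
  define \<kappa> where "\<kappa> = (D 0 a - D 0 (-a) - D 1 (-a) * (a - -a)) / (a - -a)^2"
  define p where "p t = D 0 (-a) + D 1 (-a) * (t - -a) + \<kappa> * (t - -a)^2" for t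
  have "U_h h x C \<le> (\<Sum>y\<in>C. ereal (p (x \<bullet> y)))"
    unfolding U_h_def
  proof (rule sum_mono)
    fix y assume "y \<in> C"
    then have "norm y = 1" using C by (auto simp: spherical_2_design_def)
    then have "x \<bullet> y \<in> {-1..a}"
      using Cauchy_Schwarz_ineq2[of x y] x \<open>y \<in> C\<close> by auto
    then show "h (x \<bullet> y) \<le> ereal (p (x \<bullet> y))"
      unfolding p_def \<kappa>_def using \<open>0 < a\<close> \<open>a < 1\<close>
      by (intro h_le_quadratic_hermite_interpolant) auto
  qed
  also have "(\<Sum>y\<in>C. ereal (p (x \<bullet> y))) = ereal (card C / 2 * (p a + p (-a)))"
  proof -
    define P where "P = D 0 (-a) + D 1 (-a) * a + \<kappa> * a^2"
    define Q where "Q = D 1 (-a) + 2 * \<kappa> * a"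
    have p: "p t = P + Q * t + \<kappa> * t^2" for t
      by (simp add: p_def P_def Q_def power2_eq_square algebra_simps)
    then have "(\<Sum>y\<in>C. p (x \<bullet> y)) = card C * (P + \<kappa> / CARD('n))"
      using spherical_2_design_sum_quadratic[OF C x(1)] by simp
    also have "\<dots> = card C / 2 * (p a + p (-a))"
      using \<open>a^2 = 1 / CARD('n)\<close> by (simp add: p algebra_simps)
    finally show ?thesis by (simp add: sum_ereal)
  qed
  also have "p a + p (-a) = D 0 a + D 0 (-a)"
    using \<open>0 < a\<close> by (simp add: p_def \<kappa>_def)
  finally show ?thesis .
qed

lemma cross_polytope_energy_ge:
  fixes z :: "real^'n"
  assumes z: "norm z = 1" and a: "a = 1 / sqrt CARD('n)" and n: "2 \<le> CARD('n)"
  shows "ereal (CARD('n) * (D 0 a + D 0 (-a))) \<le> U_h h z (cross_polytope :: (real^'n) set)"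
proof -
  have "0 < a" "a < 1" "a^2 = 1 / CARD('n)"
    using n by (simp_all add: a power_divide)
  define \<beta> where "\<beta> = (D 1 a - D 1 (-a)) / (2 * a)"
  have "(\<Sum>i\<in>UNIV. (z $ i)^2) = 1"
    using z by (simp add: norm_eq_sqrt_inner inner_vec_def power2_eq_square)
  then have "CARD('n) * (D 0 a + D 0 (-a)) = (\<Sum>i\<in>UNIV. D 0 a + D 0 (-a) + \<beta> * ((z $ i)^2 - a^2))"
    using \<open>a^2 = 1 / CARD('n)\<close> by (simp add: sum.distrib sum_subtractf flip: sum_distrib_left)
  then have "ereal (CARD('n) * (D 0 a + D 0 (-a)))
      = (\<Sum>i\<in>UNIV. ereal (D 0 a + D 0 (-a) + \<beta> * ((z $ i)^2 - a^2)))"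
    by (simp add: sum_ereal)
  also have "\<dots> \<le> (\<Sum>i\<in>UNIV. h (z $ i) + h (- (z $ i)))"
  proof (rule sum_mono)
    fix i
    have "\<bar>z $ i\<bar> \<le> 1" using component_le_norm_cart[of z i] z by simp
    then show "ereal (D 0 a + D 0 (-a) + \<beta> * ((z $ i)^2 - a^2)) \<le> h (z $ i) + h (- (z $ i))"
      unfolding \<beta>_def using \<open>0 < a\<close> \<open>a < 1\<close> by (intro h_even_part_ge_tangent_parabola) auto
  qed
  also have "\<dots> = U_h h z cross_polytope"
    by (simp add: U_h_def sum_cross_polytope)
  finally show ?thesis .
qed

end

theorem proposition6p6:
  fixes h :: "real \<Rightarrow> ereal"
  assumes n2: "CARD('n::finite) \<ge> 2"
    and cont: "continuous_on {-1..1} h"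
    and finite_h: "\<forall>t\<in>{-1..<1}. \<bar>h t\<bar> \<noteq> \<infinity>"
    and derivs: "\<exists>D :: nat \<Rightarrow> real \<Rightarrow> real.
        (\<forall>t\<in>{-1<..<1}. D 0 t = real_of_ereal (h t)) \<and>
        (\<forall>j<4. \<forall>t\<in>{-1<..<1}. (D j has_real_derivative D (Suc j) t) (at t)) \<and>
        (\<forall>j\<le>4. \<forall>t\<in>{-1<..<1}. D j t \<ge> 0)"
    and ncond: "CARD('n) \<in> {2, 3, 4} \<or>
        s_best TYPE(real^'n) (2 * CARD('n)) = 1 / sqrt (real CARD('n))"
    and design: "spherical_2_design (C :: (real^'n) set)"
    and cardC: "card C = 2 * CARD('n)"
  shows "Q_h h (cross_polytope :: (real^'n) set) \<ge> Q_h h C"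
proof -
  obtain D :: "nat \<Rightarrow> real \<Rightarrow> real" where
    D0: "\<forall>t\<in>{-1<..<1}. D 0 t = real_of_ereal (h t)" and
    derivative: "\<forall>j<4. \<forall>t\<in>{-1<..<1}. (D j has_real_derivative D (Suc j) t) (at t)" and
    nonneg: "\<forall>j\<le>4. \<forall>t\<in>{-1<..<1}. D j t \<ge> 0"
    using derivs by blast
  interpret smooth_potential h D
    using cont finite_h D0 derivative nonneg by unfold_locales (auto simp: ereal_real')
  define a where "a = 1 / sqrt CARD('n)"
  obtain x :: "real^'n" where x: "norm x = 1" "\<forall>y\<in>C. x \<bullet> y \<le> a"
    using point_with_small_inner_products[of C] spherical_2_design_moments[OF design] design cardC
    by (auto simp: a_def spherical_2_design_def)
  have "Q_h h C \<le> U_h h x C"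
    unfolding Q_h_def by (rule INF_lower) (simp add: x)
  also have "\<dots> \<le> ereal (CARD('n) * (D 0 a + D 0 (-a)))"
    using design_energy_le[OF design x a_def n2] cardC by simp
  also have "\<dots> \<le> Q_h h (cross_polytope :: (real^'n) set)"
    unfolding Q_h_def by (rule INF_greatest) (simp add: cross_polytope_energy_ge a_def n2)
  finally show ?thesis .
qed

end
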